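(* Let $\mathcal{C}$ be a covering of a finite set $E$ and $SH(X)=\bigcup\{K\in\mathcal{C}:K\cap X\neq\emptyset\}$ for $X\subseteq E$. Then $SH(SH(X))=SH(X)$ for all $X\subseteq E$ if and only if $\{I(x):x\in E\}$ forms a partition of $E$, where $I(x)=\bigcup\{K\in\mathcal{C}:x\in K\}$.
   Context: A covering of $E$ is a family of nonempty subsets of $E$ with union $E$. "$\{I(x):x\in E\}$ forms a partition" means the distinct sets among the $I(x)$ are pairwise disjoint (their union is $E$ since $x\in I(x)$). *)

theory Defs
  imports Main
begin

definition covering :: "'a set set \<Rightarrow> 'a set \<Rightarrow> bool" where
  "covering C E \<longleftrightarrow> (\<forall>K\<in>C. K \<noteq> {} \<and> K \<subseteq> E) \<and> \<Union>C = E"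

definition SH :: "'a set set \<Rightarrow> 'a set \<Rightarrow> 'a set" where
  "SH C X = \<Union>{K\<in>C. K \<inter> X \<noteq> {}}"

definition I :: "'a set set \<Rightarrow> 'a \<Rightarrow> 'a set" where
  "I C x = \<Union>{K\<in>C. x \<in> K}"

end

theory Submission
  imports Defs
begin

text \<open>Call \<open>x\<close> and \<open>y\<close> neighbours if they lie in a common block, i.e. \<open>x \<in> I C y\<close>; this
  relation is symmetric and reflexive on \<open>E\<close>, and \<open>SH C X = (\<Union>x\<in>X. I C x)\<close> is the set of
  neighbours of \<open>X\<close>. Both conditions then say that being neighbours is transitive:
  \<open>SH\<close> is idempotent iff neighbours of neighbours are neighbours, and the sets \<open>I C x\<close>,
  the neighbourhoods of single points, are pairwise equal or disjoint iff they are the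
  classes of an equivalence relation.\<close>

lemma mem_I_iff: "w \<in> I C x \<longleftrightarrow> (\<exists>K\<in>C. w \<in> K \<and> x \<in> K)"
  unfolding I_def by auto

lemma mem_I_commute: "w \<in> I C x \<longleftrightarrow> x \<in> I C w"
  by (auto simp: mem_I_iff)

lemma mem_I_self: "x \<in> \<Union>C \<Longrightarrow> x \<in> I C x"
  by (auto simp: mem_I_iff)

lemma SH_eq_UN_I: "SH C X = (\<Union>x\<in>X. I C x)"
  unfolding SH_def I_def by auto

lemma SH_subset_SH_SH: "SH C X \<subseteq> SH C (SH C X)"
proof
  fix w assume "w \<in> SH C X"
  then obtain x where "x \<in> X" "w \<in> I C x" unfolding SH_eq_UN_I by blast
  then have "x \<in> I C x" by (auto simp: mem_I_iff)
  with \<open>x \<in> X\<close> have "x \<in> SH C X" unfolding SH_eq_UN_I by blast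
  with \<open>w \<in> I C x\<close> show "w \<in> SH C (SH C X)" unfolding SH_eq_UN_I by blast
qed

lemma I_subset_if_SH_fixed:
  assumes fixed: "SH C (I C y) = I C y" and meet: "I C x \<inter> I C y \<noteq> {}"
  shows "I C x \<subseteq> I C y"
proof -
  from meet obtain z where "z \<in> I C x" "z \<in> I C y" by blast
  then have "x \<in> I C z" by (simp add: mem_I_commute)
  with \<open>z \<in> I C y\<close> have "x \<in> SH C (I C y)" unfolding SH_eq_UN_I by blast
  then have "x \<in> I C y" using fixed by simp
  then have "I C x \<subseteq> SH C (I C y)" unfolding SH_eq_UN_I by blast
  then show ?thesis using fixed by simp
qed

lemma SH_SH_subset_if_I_partition:
  assumes partition: "\<forall>x\<in>\<Union>C. \<forall>y\<in>\<Union>C. I C x = I C y \<or> I C x \<inter> I C y = {}"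
  shows "SH C (SH C X) \<subseteq> SH C X"
proof
  fix w assume "w \<in> SH C (SH C X)"
  then obtain x u where "x \<in> X" "u \<in> I C x" "w \<in> I C u" unfolding SH_eq_UN_I by blast
  have "u \<in> I C w" using \<open>w \<in> I C u\<close> by (simp add: mem_I_commute)
  have "w \<in> \<Union>C" "x \<in> \<Union>C"
    using \<open>w \<in> I C u\<close> \<open>u \<in> I C x\<close> by (auto simp: mem_I_iff)
  have "I C w = I C x"
    using partition \<open>w \<in> \<Union>C\<close> \<open>x \<in> \<Union>C\<close> \<open>u \<in> I C w\<close> \<open>u \<in> I C x\<close> by blast
  moreover have "w \<in> I C w" using \<open>w \<in> \<Union>C\<close> by (rule mem_I_self)
  ultimately have "w \<in> I C x" by simp
  with \<open>x \<in> X\<close> show "w \<in> SH C X" unfolding SH_eq_UN_I by blast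
qed

lemma SH_singleton: "SH C {y} = I C y"
  unfolding SH_eq_UN_I by simp

lemma SH_idempotent_iff_I_partition:
  "(\<forall>X. X \<subseteq> \<Union>C \<longrightarrow> SH C (SH C X) = SH C X) \<longleftrightarrow>
   (\<forall>x\<in>\<Union>C. \<forall>y\<in>\<Union>C. I C x = I C y \<or> I C x \<inter> I C y = {})"
proof
  assume idem: "\<forall>X. X \<subseteq> \<Union>C \<longrightarrow> SH C (SH C X) = SH C X"
  have fixed: "SH C (I C y) = I C y" if "y \<in> \<Union>C" for y
    using idem that by (metis SH_singleton empty_subsetI insert_subset)
  show "\<forall>x\<in>\<Union>C. \<forall>y\<in>\<Union>C. I C x = I C y \<or> I C x \<inter> I C y = {}"
  proof (intro ballI)
    fix x y assume "x \<in> \<Union>C" "y \<in> \<Union>C"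
    then show "I C x = I C y \<or> I C x \<inter> I C y = {}"
      using I_subset_if_SH_fixed[of C] fixed by (metis Int_commute subset_antisym)
  qed
next
  assume "\<forall>x\<in>\<Union>C. \<forall>y\<in>\<Union>C. I C x = I C y \<or> I C x \<inter> I C y = {}"
  then show "\<forall>X. X \<subseteq> \<Union>C \<longrightarrow> SH C (SH C X) = SH C X"
    using SH_SH_subset_if_I_partition SH_subset_SH_SH by (metis subset_antisym)
qed

theorem proposition10:
  fixes E :: "'a set" and C :: "'a set set"
  assumes "finite E" and "covering C E"
  shows "(\<forall>X. X \<subseteq> E \<longrightarrow> SH C (SH C X) = SH C X) \<longleftrightarrow>
         (\<forall>x\<in>E. \<forall>y\<in>E. I C x = I C y \<or> I C x \<inter> I C y = {})"
proof -
  from \<open>covering C E\<close> have "\<Union>C = E" by (simp add: covering_def)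
  then show ?thesis using SH_idempotent_iff_I_partition[of C] by simp
qed

end
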